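(* Let $R=\mathbb{Z}[x_1,\dots,x_n]$ or $R=\mathbb{Z}[[x_1,\dots,x_n]]$, and fix $i\in\{1,\dots,n\}$. For every $f\in R$ and every positive integer $m$, \[\sum_{\ell=0}^{m}(\ell-1)\,D_{\ell,i}(f)\,D_{m-\ell,i}(f^{m-1})=0 .\] The same identity holds with $\mathbb{Z}$ replaced by any field $k$ of characteristic $p>0$ (with the operators reduced mod $p$).
   Context: For $m\ge 0$, $D_{m,i}:R\to R$ is the map that is linear over $\mathbb{Z}[x_1,\dots,x_{i-1},x_{i+1},\dots,x_n]$ (resp. over $\mathbb{Z}[[x_1,\dots,x_{i-1},x_{i+1},\dots,x_n]]$, and compatible with infinite sums in the power series case) and sends $x_i^{\ell}$ to $\binom{\ell}{m}x_i^{\ell-m}$ (which is $0$ when $\ell<m$); $D_{0,i}$ is the identity. Formally $D_{m,i}=\frac{1}{m!}\frac{\partial^m}{\partial x_i^m}$. Over a field $k$ of characteristic $p$, $D_{m,i}$ is defined by the same formula on $k[x_1,\dots,x_n]$ or $k[[x_1,\dots,x_n]]$. *)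

theory Defs
  imports Main
begin

text \<open>Formal power series in finitely many variables (the variables are the elements
  of a finite type 'v, so n = CARD('v)), with coefficients in 'a: a series is its
  coefficient function on exponent vectors 'v => nat.  Polynomials are the series
  with finite support.\<close>

type_synonym ('v, 'a) mps = "('v \<Rightarrow> nat) \<Rightarrow> 'a"

definition mps_mult :: "('v::finite, 'a::comm_semiring_1) mps \<Rightarrow> ('v, 'a) mps \<Rightarrow> ('v, 'a) mps" where
  "mps_mult f g = (\<lambda>\<alpha>. \<Sum>\<beta>\<in>{\<beta>. \<beta> \<le> \<alpha>}. f \<beta> * g (\<lambda>v. \<alpha> v - \<beta> v))"

definition mps_one :: "('v, 'a::comm_semiring_1) mps" where
  "mps_one = (\<lambda>\<alpha>. if \<alpha> = (\<lambda>_. 0) then 1 else 0)"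

primrec mps_pow :: "('v::finite, 'a::comm_semiring_1) mps \<Rightarrow> nat \<Rightarrow> ('v, 'a) mps" where
  "mps_pow f 0 = mps_one"
| "mps_pow f (Suc k) = mps_mult f (mps_pow f k)"

definition is_poly :: "('v, 'a::zero) mps \<Rightarrow> bool" where
  "is_poly f \<longleftrightarrow> finite {\<alpha>. f \<alpha> \<noteq> 0}"

text \<open>Hasse derivative D_{m,i}: sends x_i^l to (l choose m) x_i^(l-m), linear over the other
  variables and compatible with infinite sums.\<close>

definition hasse :: "nat \<Rightarrow> 'v \<Rightarrow> ('v, 'a::comm_semiring_1) mps \<Rightarrow> ('v, 'a) mps" where
  "hasse m i f = (\<lambda>\<alpha>. of_nat ((\<alpha> i + m) choose m) * f (\<alpha>(i := \<alpha> i + m)))"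

definition hasse_sum :: "'v \<Rightarrow> nat \<Rightarrow> ('v::finite, 'a::comm_ring_1) mps \<Rightarrow> ('v, 'a) mps" where
  "hasse_sum i m f = (\<lambda>\<alpha>. \<Sum>l = 0..m. of_int (int l - 1) *
      mps_mult (hasse l i f) (hasse (m - l) i (mps_pow f (m - 1))) \<alpha>)"

end

theory Submission
  imports Defs "HOL-Library.FuncSet" "HOL-Library.Multiset" "HOL-Combinatorics.Transposition"
begin

(* The identity  sum_{l=0}^m (l-1) D_{l,i}(f) D_{m-l,i}(f^(m-1)) = 0  holds over every
   commutative ring, so we prove it for arbitrary coefficients of class comm_ring_1 and
   all series at once; polynomials and the cases Z and char p are then special cases.

   Fix an exponent vector alpha and put E = alpha + m e_i, N = E_i.  Expanding the
   Hasse derivatives, the coefficient of x^alpha becomes a sum over beta <= E of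
   f_beta (f^(m-1))_(E-beta) times  sum_l (l-1) C(beta_i,l) C(N-beta_i,m-l), which by
   Vandermonde's identity equals  beta_i C(N-1,m-1) - C(N,m).  Writing f^m and
   f * f^(m-1) as sums over ordered compositions gamma = (gamma_0,...,gamma_(m-1)) of E,
   the claim reduces to  C(N-1,m-1) * sum_gamma gamma_0,i P(gamma) = C(N,m) * sum_gamma
   P(gamma),  with P(gamma) the product of the f(gamma_j).  P only depends on the
   multiset of parts; on each class of compositions with a fixed multiset of parts,
   permuting the parts shows  m * sum gamma_0,i = N * #class  in the naturals, and
   m C(N,m) = N C(N-1,m-1) lets us cancel m there, avoiding division in the ring. *)

section \<open>Ordered compositions of an exponent vector\<close>

lemma finite_lower_set: "finite {\<beta>::'v::finite \<Rightarrow> nat. \<beta> \<le> E}"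
proof -
  have "{\<beta>::'v \<Rightarrow> nat. \<beta> \<le> E} \<subseteq> Pi\<^sub>E UNIV (\<lambda>v. {..E v})"
    by (auto simp: le_fun_def PiE_def Pi_def)
  moreover have "finite (Pi\<^sub>E (UNIV::'v set) (\<lambda>v. {..E v}))" by (rule finite_PiE) auto
  ultimately show ?thesis by (rule finite_subset)
qed

definition compositions :: "nat \<Rightarrow> ('v \<Rightarrow> nat) \<Rightarrow> (nat \<Rightarrow> 'v \<Rightarrow> nat) set" where
  "compositions k E = {\<gamma> \<in> Pi\<^sub>E {..<k} (\<lambda>_. {\<beta>. \<beta> \<le> E}). \<forall>v. (\<Sum>j<k. \<gamma> j v) = E v}"

lemma finite_compositions: "finite (compositions k (E::'v::finite \<Rightarrow> nat))"
  unfolding compositions_def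
  by (rule finite_subset[OF _ finite_PiE[of "{..<k}" "\<lambda>_. {\<beta>. \<beta> \<le> E}"]])
     (auto simp: finite_lower_set)

lemma composition_part_le:
  fixes \<gamma> :: "nat \<Rightarrow> 'v \<Rightarrow> nat"
  assumes "j < k" and "\<forall>v. (\<Sum>j<k. \<gamma> j v) = E v"
  shows "\<gamma> j \<le> E"
  unfolding le_fun_def
proof
  fix v
  have "\<gamma> j v \<le> (\<Sum>j<k. \<gamma> j v)"
    using member_le_sum[of j "{..<k}" "\<lambda>j. \<gamma> j v"] assms(1) by simp
  then show "\<gamma> j v \<le> E v" using assms(2) by simp
qed

lemma compositions_Suc_iff:
  "case_nat \<beta> \<gamma> \<in> compositions (Suc k) E \<longleftrightarrow> \<beta> \<le> E \<and> \<gamma> \<in> compositions k (\<lambda>v. E v - \<beta> v)"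
proof
  assume A: "case_nat \<beta> \<gamma> \<in> compositions (Suc k) E"
  hence sum: "\<forall>v. \<beta> v + (\<Sum>j<k. \<gamma> j v) = E v"
    unfolding compositions_def by (simp add: sum.lessThan_Suc_shift del: sum.lessThan_Suc)
  hence "\<beta> \<le> E" by (auto simp: le_fun_def) (metis le_add1)
  moreover have "\<forall>v. (\<Sum>j<k. \<gamma> j v) = E v - \<beta> v"
    using sum by (metis add_diff_cancel_left')
  moreover have "\<gamma> \<in> Pi\<^sub>E {..<k} (\<lambda>_. UNIV)"
    using A unfolding compositions_def PiE_def extensional_def by auto
  ultimately show "\<beta> \<le> E \<and> \<gamma> \<in> compositions k (\<lambda>v. E v - \<beta> v)"
    unfolding compositions_def using composition_part_le[of _ k \<gamma>] by (auto simp: PiE_def)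
next
  assume A: "\<beta> \<le> E \<and> \<gamma> \<in> compositions k (\<lambda>v. E v - \<beta> v)"
  hence "\<forall>v. (\<Sum>j<Suc k. case_nat \<beta> \<gamma> j v) = E v"
    unfolding compositions_def
    by (auto simp: sum.lessThan_Suc_shift le_fun_def simp del: sum.lessThan_Suc)
  moreover have "case_nat \<beta> \<gamma> \<in> Pi\<^sub>E {..<Suc k} (\<lambda>_. UNIV)"
    using A unfolding compositions_def PiE_def extensional_def by (auto split: nat.splits)
  ultimately show "case_nat \<beta> \<gamma> \<in> compositions (Suc k) E"
    unfolding compositions_def using composition_part_le[of _ "Suc k" "case_nat \<beta> \<gamma>"]
    by (auto simp: PiE_def)
qed

lemma case_nat_head_tail: "case_nat (\<delta> 0) (\<delta> \<circ> Suc) = \<delta>"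
  by (auto simp: fun_eq_iff split: nat.splits)

lemma weighted_mult_compositions:
  fixes f :: "('v::finite, 'a::comm_ring_1) mps"
  assumes pow: "\<And>E. mps_pow f k E = (\<Sum>\<gamma>\<in>compositions k E. \<Prod>j<k. f (\<gamma> j))"
  shows "(\<Sum>\<beta>\<in>{\<beta>. \<beta> \<le> E}. w \<beta> * (f \<beta> * mps_pow f k (\<lambda>v. E v - \<beta> v)))
       = (\<Sum>\<gamma>\<in>compositions (Suc k) E. w (\<gamma> 0) * (\<Prod>j<Suc k. f (\<gamma> j)))"
proof -
  let ?S = "Sigma {\<beta>. \<beta> \<le> E} (\<lambda>\<beta>. compositions k (\<lambda>v. E v - \<beta> v))"
  have "(\<Sum>\<beta>\<in>{\<beta>. \<beta> \<le> E}. w \<beta> * (f \<beta> * mps_pow f k (\<lambda>v. E v - \<beta> v)))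
     = (\<Sum>\<beta>\<in>{\<beta>. \<beta> \<le> E}. \<Sum>\<gamma>\<in>compositions k (\<lambda>v. E v - \<beta> v).
          w \<beta> * (f \<beta> * (\<Prod>j<k. f (\<gamma> j))))"
    by (simp add: pow sum_distrib_left)
  also have "\<dots> = (\<Sum>p\<in>?S. w (fst p) * (f (fst p) * (\<Prod>j<k. f (snd p j))))"
    by (simp add: sum.Sigma finite_lower_set finite_compositions split_beta)
  also have "\<dots> = (\<Sum>\<gamma>\<in>compositions (Suc k) E. w (\<gamma> 0) * (\<Prod>j<Suc k. f (\<gamma> j)))"
  proof (rule sum.reindex_bij_witness[where i="\<lambda>\<delta>. (\<delta> 0, \<delta> \<circ> Suc)"
                                        and j="\<lambda>p. case_nat (fst p) (snd p)"])
    fix \<delta> assume "\<delta> \<in> compositions (Suc k) E"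
    then have "case_nat (\<delta> 0) (\<delta> \<circ> Suc) \<in> compositions (Suc k) E"
      by (simp only: case_nat_head_tail)
    then show "(\<delta> 0, \<delta> \<circ> Suc) \<in> ?S" by (simp only: compositions_Suc_iff) simp
  qed (auto simp: compositions_Suc_iff case_nat_head_tail prod.lessThan_Suc_shift
            simp del: prod.lessThan_Suc)
  finally show ?thesis .
qed

lemma mps_pow_compositions:
  fixes f :: "('v::finite, 'a::comm_ring_1) mps"
  shows "mps_pow f k E = (\<Sum>\<gamma>\<in>compositions k E. \<Prod>j<k. f (\<gamma> j))"
proof (induction k arbitrary: E)
  case 0
  have "compositions 0 E = (if E = (\<lambda>_. 0) then {\<lambda>_. undefined} else {})"
    by (auto simp: compositions_def PiE_def extensional_def)
  then show ?case by (simp add: mps_one_def)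
next
  case (Suc k)
  show ?case
    using weighted_mult_compositions[OF Suc.IH, of "\<lambda>_. 1" E] by (simp add: mps_mult_def)
qed

section \<open>A weighted Vandermonde identity\<close>

lemma vandermonde_first_moment:
  assumes "a \<le> N" and "0 < m"
  shows "(\<Sum>l=0..m. l * (a choose l) * ((N - a) choose (m - l))) = a * ((N - 1) choose (m - 1))"
proof -
  obtain m' where m: "m = Suc m'" using assms(2) by (cases m) auto
  have "(\<Sum>l=0..m. l * (a choose l) * ((N - a) choose (m - l)))
      = (\<Sum>l\<le>m'. Suc l * (a choose Suc l) * ((N - a) choose (m' - l)))"
    unfolding m atLeast0AtMost sum.atMost_Suc_shift by simp
  also have "\<dots> = (\<Sum>l\<le>m'. a * ((a - 1) choose l) * ((N - a) choose (m' - l)))"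
    using times_binomial_minus1_eq[of "Suc _" a] by simp
  also have "\<dots> = a * (\<Sum>l\<le>m'. ((a - 1) choose l) * ((N - a) choose (m' - l)))"
    by (simp add: sum_distrib_left mult.assoc)
  also have "\<dots> = a * ((a - 1 + (N - a)) choose m')" by (simp add: vandermonde)
  also have "\<dots> = a * ((N - 1) choose (m - 1))"
    using assms(1) by (cases a) (auto simp: m)
  finally show ?thesis .
qed

lemma vandermonde_shifted_moment:
  assumes "a \<le> N" and "0 < m"
  shows "(\<Sum>l=0..m. (int l - 1) * int (a choose l) * int ((N - a) choose (m - l)))
       = int a * int ((N - 1) choose (m - 1)) - int (N choose m)"
proof -
  have vdm: "(\<Sum>l=0..m. (a choose l) * ((N - a) choose (m - l))) = N choose m"
    using vandermonde[of a "N - a" m] assms(1) by (simp add: atLeast0AtMost)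
  have "(\<Sum>l=0..m. (int l - 1) * int (a choose l) * int ((N - a) choose (m - l)))
     = (\<Sum>l=0..m. int (l * (a choose l) * ((N - a) choose (m - l)))
                  - int ((a choose l) * ((N - a) choose (m - l))))"
    by (rule sum.cong) (auto simp: algebra_simps)
  also have "\<dots> = int (\<Sum>l=0..m. l * (a choose l) * ((N - a) choose (m - l)))
                 - int (\<Sum>l=0..m. (a choose l) * ((N - a) choose (m - l)))"
    by (simp only: sum_subtractf of_nat_sum)
  finally show ?thesis unfolding vdm vandermonde_first_moment[OF assms] by simp
qed

text \<open>The coefficient of x^alpha in D_l(f) D_(m-l)(g), written as a sum over the exponents
  beta <= E = alpha + m e_i of f: the binomial factors vanish outside the range where
  the Hasse derivatives are nonzero.\<close>

lemma hasse_mult_coeff: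
  fixes f g :: "('v::finite, 'a::comm_ring_1) mps" and i :: 'v and \<alpha> :: "'v \<Rightarrow> nat"
  assumes lm: "l \<le> m"
  defines "E \<equiv> \<alpha>(i := \<alpha> i + m)"
  shows "mps_mult (hasse l i f) (hasse (m - l) i g) \<alpha> =
    (\<Sum>\<gamma>\<in>{\<gamma>. \<gamma> \<le> E}. of_nat (\<gamma> i choose l) * of_nat ((E i - \<gamma> i) choose (m - l))
        * (f \<gamma> * g (\<lambda>v. E v - \<gamma> v)))"
proof -
  let ?shifted = "{\<gamma>. \<gamma> \<le> E \<and> l \<le> \<gamma> i \<and> \<gamma> i \<le> \<alpha> i + l}"
  let ?h = "\<lambda>\<gamma>. of_nat (\<gamma> i choose l) * of_nat ((E i - \<gamma> i) choose (m - l))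
                  * (f \<gamma> * g (\<lambda>v. E v - \<gamma> v)) :: 'a"
  have Ei: "E i = \<alpha> i + m" by (simp add: E_def)
  have "mps_mult (hasse l i f) (hasse (m - l) i g) \<alpha> = sum ?h ?shifted"
    unfolding mps_mult_def hasse_def
  proof (rule sum.reindex_bij_witness[where i="\<lambda>\<gamma>. \<gamma>(i := \<gamma> i - l)"
                                        and j="\<lambda>\<beta>. \<beta>(i := \<beta> i + l)"])
    fix \<beta> assume "\<beta> \<in> {\<beta>. \<beta> \<le> \<alpha>}"
    hence bi: "\<beta> i \<le> \<alpha> i" by (simp add: le_fun_def)
    have e1: "(\<lambda>v. \<alpha> v - \<beta> v)(i := \<alpha> i - \<beta> i + (m - l)) = (\<lambda>v. E v - (\<beta>(i := \<beta> i + l)) v)"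
      using bi lm by (auto simp: fun_eq_iff E_def)
    have e2: "\<alpha> i - \<beta> i + (m - l) = E i - (\<beta> i + l)" using bi lm by (simp add: Ei)
    show "?h (\<beta>(i := \<beta> i + l)) = of_nat ((\<beta> i + l) choose l) * f (\<beta>(i := \<beta> i + l)) *
       (of_nat (((\<lambda>v. \<alpha> v - \<beta> v) i + (m - l)) choose (m - l)) *
        g ((\<lambda>v. \<alpha> v - \<beta> v)(i := (\<lambda>v. \<alpha> v - \<beta> v) i + (m - l))))"
      unfolding e1 unfolding e2 by (simp add: mult_ac)
  qed (auto simp: le_fun_def lm add.commute E_def intro: add_le_mono, metis)
  also have "\<dots> = sum ?h {\<gamma>. \<gamma> \<le> E}"
  proof (rule sum.mono_neutral_left)
    show "\<forall>\<gamma>\<in>{\<gamma>. \<gamma> \<le> E} - ?shifted. ?h \<gamma> = 0"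
    proof
      fix \<gamma> assume \<gamma>: "\<gamma> \<in> {\<gamma>. \<gamma> \<le> E} - ?shifted"
      hence "\<gamma> i \<le> E i" by (simp add: le_fun_def)
      with \<gamma> have "\<gamma> i < l \<or> E i - \<gamma> i < m - l" by (auto simp: Ei)
      thus "?h \<gamma> = 0" by (auto simp: binomial_eq_0)
    qed
  qed (auto simp: finite_lower_set)
  finally show ?thesis .
qed

lemma hasse_sum_coeff:
  fixes f :: "('v::finite, 'a::comm_ring_1) mps" and i :: 'v and \<alpha> :: "'v \<Rightarrow> nat"
  assumes m: "0 < m"
  defines "E \<equiv> \<alpha>(i := \<alpha> i + m)"
  defines "P \<equiv> \<lambda>\<gamma>. \<Prod>j<m. f (\<gamma> j)"
  shows "hasse_sum i m f \<alpha> =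
     of_nat ((E i - 1) choose (m - 1)) * (\<Sum>\<gamma>\<in>compositions m E. of_nat (\<gamma> 0 i) * P \<gamma>)
     - of_nat (E i choose m) * (\<Sum>\<gamma>\<in>compositions m E. P \<gamma>)"
proof -
  let ?C1 = "of_nat ((E i - 1) choose (m - 1)) :: 'a" and ?C0 = "of_nat (E i choose m) :: 'a"
  let ?Q = "\<lambda>\<gamma>. f \<gamma> * mps_pow f (m - 1) (\<lambda>v. E v - \<gamma> v)"
  have scalar: "(\<Sum>l=0..m. of_int (int l - 1) *
                   (of_nat (\<gamma> i choose l) * of_nat ((E i - \<gamma> i) choose (m - l))))
              = ?C1 * of_nat (\<gamma> i) - ?C0" if "\<gamma> i \<le> E i" for \<gamma> :: "'v \<Rightarrow> nat"
  proof -
    have "(\<Sum>l=0..m. of_int (int l - 1) *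
             (of_nat (\<gamma> i choose l) * of_nat ((E i - \<gamma> i) choose (m - l))) :: 'a)
       = of_int (\<Sum>l=0..m. (int l - 1) * int (\<gamma> i choose l) * int ((E i - \<gamma> i) choose (m - l)))"
      by (simp add: mult.assoc)
    then show ?thesis
      unfolding vandermonde_shifted_moment[OF that m] by (simp add: mult.commute)
  qed
  have "hasse_sum i m f \<alpha> = (\<Sum>l=0..m. of_int (int l - 1) * (\<Sum>\<gamma>\<in>{\<gamma>. \<gamma> \<le> E}.
      of_nat (\<gamma> i choose l) * of_nat ((E i - \<gamma> i) choose (m - l)) * ?Q \<gamma>))"
    unfolding hasse_sum_def E_def by (simp add: hasse_mult_coeff)
  also have "\<dots> = (\<Sum>\<gamma>\<in>{\<gamma>. \<gamma> \<le> E}. (\<Sum>l=0..m. of_int (int l - 1) *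
      (of_nat (\<gamma> i choose l) * of_nat ((E i - \<gamma> i) choose (m - l)))) * ?Q \<gamma>)"
    by (simp add: sum_distrib_left sum_distrib_right mult_ac sum.swap[of _ "{0..m}"])
  also have "\<dots> = (\<Sum>\<gamma>\<in>{\<gamma>. \<gamma> \<le> E}. (?C1 * of_nat (\<gamma> i) - ?C0) * ?Q \<gamma>)"
  proof (rule sum.cong[OF refl])
    fix \<gamma> assume "\<gamma> \<in> {\<gamma>. \<gamma> \<le> E}"
    then have "\<gamma> i \<le> E i" by (simp add: le_fun_def)
    then show "(\<Sum>l=0..m. of_int (int l - 1) *
        (of_nat (\<gamma> i choose l) * of_nat ((E i - \<gamma> i) choose (m - l)))) * ?Q \<gamma>
      = (?C1 * of_nat (\<gamma> i) - ?C0) * ?Q \<gamma>" by (simp only: scalar)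
  qed
  also have "\<dots> = ?C1 * (\<Sum>\<gamma>\<in>{\<gamma>. \<gamma> \<le> E}. of_nat (\<gamma> i) * ?Q \<gamma>) - ?C0 * (\<Sum>\<gamma>\<in>{\<gamma>. \<gamma> \<le> E}. ?Q \<gamma>)"
    by (simp add: algebra_simps sum_subtractf sum_distrib_left)
  also have "(\<Sum>\<gamma>\<in>{\<gamma>. \<gamma> \<le> E}. ?Q \<gamma>) = mps_pow f m E"
    using m by (cases m) (auto simp: mps_mult_def)
  also have "(\<Sum>\<gamma>\<in>{\<gamma>. \<gamma> \<le> E}. of_nat (\<gamma> i) * ?Q \<gamma>)
           = (\<Sum>\<gamma>\<in>compositions m E. of_nat (\<gamma> 0 i) * P \<gamma>)"
    using weighted_mult_compositions[where f=f and k="m - 1" and w="\<lambda>\<beta>. of_nat (\<beta> i)"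
                                       and E=E, OF mps_pow_compositions] m
    by (simp add: P_def)
  finally show ?thesis by (simp add: mps_pow_compositions P_def)
qed

section \<open>Symmetry of compositions\<close>

definition parts :: "nat \<Rightarrow> (nat \<Rightarrow> 'b) \<Rightarrow> 'b multiset" where
  "parts m \<gamma> = image_mset \<gamma> (mset_set {..<m})"

lemma prod_parts: "(\<Prod>j<m. f (\<gamma> j)) = prod_mset (image_mset f (parts m \<gamma>))"
  by (simp add: parts_def prod_unfold_prod_mset multiset.map_comp comp_def)

lemma parts_transpose:
  assumes "j < m" and "0 < m"
  shows "parts m (\<gamma> \<circ> transpose 0 j) = parts m \<gamma>"
proof -
  have "parts m (\<gamma> \<circ> transpose 0 j) = image_mset \<gamma> (image_mset (transpose 0 j) (mset_set {..<m}))"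
    by (simp add: parts_def multiset.map_comp)
  also have "\<dots> = parts m \<gamma>"
    using assms by (simp add: image_mset_mset_set parts_def)
  finally show ?thesis .
qed

lemma compositions_transpose:
  assumes j: "j < m" and \<gamma>: "\<gamma> \<in> compositions m E"
  shows "\<gamma> \<circ> transpose 0 j \<in> compositions m E"
proof -
  have sum: "(\<Sum>x<m. \<gamma> (transpose 0 j x) v) = (\<Sum>x<m. \<gamma> x v)" for v
    using sum.reindex[OF inj_on_transpose[of 0 j "{..<m}"], of "\<lambda>x. \<gamma> x v"] j by simp
  have "transpose 0 j x < m" if "x < m" for x
    using that j by (simp add: transpose_def)
  moreover have "transpose 0 j x = x" if "\<not> x < m" for x
    using that j by (simp add: transpose_def)
  ultimately show ?thesis
    using \<gamma> sum unfolding compositions_def PiE_def extensional_def Pi_def by auto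
qed

lemma class_sum_first_part:
  fixes E :: "'v \<Rightarrow> nat" and M :: "('v \<Rightarrow> nat) multiset"
  assumes m: "0 < m"
  defines "S \<equiv> {\<gamma> \<in> compositions m E. parts m \<gamma> = M}"
  shows "m * (\<Sum>\<gamma>\<in>S. \<gamma> 0 i) = E i * card S"
proof -
  have swap: "(\<Sum>\<gamma>\<in>S. \<gamma> j i) = (\<Sum>\<gamma>\<in>S. \<gamma> 0 i)" if j: "j < m" for j
  proof -
    have closed: "\<gamma> \<circ> transpose 0 j \<in> S" if "\<gamma> \<in> S" for \<gamma>
    proof -
      from that have "\<gamma> \<in> compositions m E" and "parts m \<gamma> = M" by (simp_all add: S_def)
      then show ?thesis by (simp add: S_def compositions_transpose[OF j] parts_transpose[OF j m])
    qed
    show ?thesis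
      by (rule sum.reindex_bij_witness[where i="\<lambda>\<gamma>. \<gamma> \<circ> transpose 0 j"
                                         and j="\<lambda>\<gamma>. \<gamma> \<circ> transpose 0 j"])
         (simp_all add: closed comp_assoc)
  qed
  have "(\<Sum>j<m. \<Sum>\<gamma>\<in>S. \<gamma> j i) = (\<Sum>j<m. \<Sum>\<gamma>\<in>S. \<gamma> 0 i)"
    by (intro sum.cong refl swap) simp
  then have "m * (\<Sum>\<gamma>\<in>S. \<gamma> 0 i) = (\<Sum>j<m. \<Sum>\<gamma>\<in>S. \<gamma> j i)" by simp
  also have "\<dots> = (\<Sum>\<gamma>\<in>S. \<Sum>j<m. \<gamma> j i)" by (rule sum.swap)
  also have "\<dots> = (\<Sum>\<gamma>\<in>S. E i)" by (rule sum.cong) (auto simp: S_def compositions_def)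
  finally show ?thesis by (simp add: mult.commute)
qed

lemma sum_by_classes:
  fixes P :: "'x \<Rightarrow> 'a::comm_ring_1"
  assumes fin: "finite T" and P: "\<And>\<gamma>. \<gamma> \<in> T \<Longrightarrow> P \<gamma> = Q (cls \<gamma>)"
    and totals: "\<And>M. (\<Sum>\<gamma>\<in>{\<gamma>\<in>T. cls \<gamma> = M}. a \<gamma>) = (\<Sum>\<gamma>\<in>{\<gamma>\<in>T. cls \<gamma> = M}. b \<gamma>)"
  shows "(\<Sum>\<gamma>\<in>T. of_nat (a \<gamma>) * P \<gamma>) = (\<Sum>\<gamma>\<in>T. of_nat (b \<gamma>) * P \<gamma>)"
proof -
  have grouped: "(\<Sum>\<gamma>\<in>T. of_nat (c \<gamma>) * P \<gamma>)
               = (\<Sum>M\<in>cls ` T. of_nat (\<Sum>\<gamma>\<in>{\<gamma>\<in>T. cls \<gamma> = M}. c \<gamma>) * Q M)" for c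
  proof -
    have "(\<Sum>\<gamma>\<in>T. of_nat (c \<gamma>) * P \<gamma>)
        = (\<Sum>M\<in>cls ` T. \<Sum>\<gamma>\<in>{\<gamma>\<in>T. cls \<gamma> = M}. of_nat (c \<gamma>) * P \<gamma>)"
      by (rule sum.group[symmetric]) (auto simp: fin)
    also have "\<dots> = (\<Sum>M\<in>cls ` T. \<Sum>\<gamma>\<in>{\<gamma>\<in>T. cls \<gamma> = M}. of_nat (c \<gamma>) * Q M)"
      by (intro sum.cong refl) (auto simp: P)
    finally show ?thesis by (simp add: sum_distrib_right)
  qed
  show ?thesis unfolding grouped totals ..
qed

lemma first_part_identity:
  fixes f :: "('v::finite, 'a::comm_ring_1) mps"
  assumes m: "0 < m"
  shows "of_nat ((E i - 1) choose (m - 1)) * (\<Sum>\<gamma>\<in>compositions m E. of_nat (\<gamma> 0 i) * (\<Prod>j<m. f (\<gamma> j)))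
       = of_nat (E i choose m) * (\<Sum>\<gamma>\<in>compositions m E. (\<Prod>j<m. f (\<gamma> j)))"
proof -
  define C1 where "C1 = (E i - 1) choose (m - 1)"
  define C0 where "C0 = E i choose m"
  have "(\<Sum>\<gamma>\<in>compositions m E. of_nat (C1 * \<gamma> 0 i) * (\<Prod>j<m. f (\<gamma> j)))
      = (\<Sum>\<gamma>\<in>compositions m E. of_nat C0 * (\<Prod>j<m. f (\<gamma> j)))"
  proof (rule sum_by_classes[where cls="parts m"])
    fix M
    let ?S = "{\<gamma> \<in> compositions m E. parts m \<gamma> = M}"
    have "m * (C1 * (\<Sum>\<gamma>\<in>?S. \<gamma> 0 i)) = C1 * (m * (\<Sum>\<gamma>\<in>?S. \<gamma> 0 i))"
      by (simp only: mult.left_commute)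
    also have "\<dots> = C1 * (E i * card ?S)" by (simp only: class_sum_first_part[OF m])
    also have "\<dots> = (E i * C1) * card ?S" by (simp only: mult_ac)
    also have "E i * C1 = m * C0"
      unfolding C0_def C1_def by (rule times_binomial_minus1_eq[OF m, symmetric])
    finally have "C1 * (\<Sum>\<gamma>\<in>?S. \<gamma> 0 i) = C0 * card ?S" using m by (simp add: mult.assoc)
    then show "(\<Sum>\<gamma>\<in>?S. C1 * \<gamma> 0 i) = (\<Sum>\<gamma>\<in>?S. C0)"
      by (simp add: sum_distrib_left mult.commute)
  qed (auto simp: finite_compositions prod_parts)
  then show ?thesis
    by (simp add: sum_distrib_left mult.assoc C0_def C1_def)
qed

lemma hasse_sum_eq_zero:
  fixes f :: "('v::finite, 'a::comm_ring_1) mps"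
  assumes "0 < m"
  shows "hasse_sum i m f = (\<lambda>_. 0)"
proof
  fix \<alpha> :: "'v \<Rightarrow> nat"
  show "hasse_sum i m f \<alpha> = 0"
    unfolding hasse_sum_coeff[OF assms] first_part_identity[OF assms] by simp
qed

theorem mainTheorem3:
  fixes i :: "'v::finite" and m :: nat
  assumes "m > 0"
  shows "(\<forall>f :: ('v, int) mps. is_poly f \<longrightarrow> hasse_sum i m f = (\<lambda>_. 0))
       \<and> (\<forall>f :: ('v, int) mps. hasse_sum i m f = (\<lambda>_. 0))
       \<and> (CHAR('k::field) > 0 \<longrightarrow>
            (\<forall>f :: ('v, 'k) mps. is_poly f \<longrightarrow> hasse_sum i m f = (\<lambda>_. 0))
          \<and> (\<forall>f :: ('v, 'k) mps. hasse_sum i m f = (\<lambda>_. 0)))"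
  by (simp add: hasse_sum_eq_zero[OF assms])

end
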